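(* Let $f\in C_{\mathbb{R}}[0,1]$, $u\in(0,1]$ and $\rho>0$. If $f(u)\neq0$, then there exist a constant $d>0$ and a sequence $\{\rho_k\}_{k\ge1}$ with $\rho_k\to+\infty$ such that $|\Phi_{f,u}(\rho_k)|>\rho e^{d\rho_k}$ for all $k\ge1$.
   Context: $C_{\mathbb{R}}[0,1]$ denotes the real-valued continuous functions on $[0,1]$. For $f\in C[0,1]$ and $u\in(0,1]$, $\Phi_{f,u}(z)=\int_0^u f(s)e^{(u-s)z}\,ds$ ($z\in\mathbb{C}$). *)

theory Defs
  imports "HOL-Analysis.Analysis"
begin

definition Phi :: "(real \<Rightarrow> real) \<Rightarrow> real \<Rightarrow> complex \<Rightarrow> complex" where
  "Phi f u z = integral {0..u} (\<lambda>s. complex_of_real (f s) * exp (complex_of_real (u - s) * z))"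

end

theory Submission
  imports Defs "HOL-Complex_Analysis.Complex_Analysis" "HOL-Real_Asymp.Real_Asymp"
begin

text \<open>
  For real x the value G(x) = Phi f u x = \<integral>[0,u] f(s) exp((u - s) x) ds is real. If the
  conclusion failed, then for every d > 0 eventually |G(x)| \<le> \<rho> exp(d x). The Laplace
  transform L(z) = \<integral>[0,\<infinity>) G(x) exp(-z x) dx then converges locally uniformly on Re z > d,
  so it is holomorphic there and real on the real axis. For Re z > u, Fubini gives
  L(z) = S(z) = \<integral>[0,u] f(s) / (z - (u - s)) ds, and S is holomorphic on the upper
  half-plane, so L = S on {Re z > d, Im z > 0} by analytic continuation. For 0 < p < u - d,
  -Im S(u - p + i\<epsilon>) is the Poisson integral of f at p, which tends to \<pi> f(p) as
  \<epsilon> \<rightarrow> 0+; but it also tends to -Im L(u - p) = 0. So f vanishes on (0, u), and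
  f(u) = 0 by continuity.
\<close>

lemma frequently_at_top_imp_filterlim_seq:
  fixes P :: "real \<Rightarrow> bool"
  assumes "\<exists>\<^sub>F x in at_top. P x"
  shows "\<exists>r :: nat \<Rightarrow> real. filterlim r at_top sequentially \<and> (\<forall>k. P (r k))"
proof -
  have "\<exists>x\<ge>real k. P x" for k
    using assms unfolding frequently_def eventually_at_top_linorder by (meson not_le order.refl)
  then obtain r where r: "\<And>k. real k \<le> r k \<and> P (r k)"
    by metis
  have "filterlim r at_top sequentially"
    by (rule filterlim_at_top_mono[OF filterlim_real_sequentially]) (use r in auto)
  with r show ?thesis
    by blast
qed

section \<open>Laplace transforms of functions of exponential growth\<close>

lemma has_integral_exp_linear:
  fixes w :: "'a :: {real_normed_field, banach}"
  assumes "w \<noteq> 0" "a \<le> b"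
  shows "((\<lambda>x. exp (w * of_real x)) has_integral (exp (w * of_real b) - exp (w * of_real a)) / w) {a..b}"
proof -
  have "((\<lambda>x. exp (w * of_real x)) has_integral
      exp (w * of_real b) / w - exp (w * of_real a) / w) {a..b}"
  proof (rule fundamental_theorem_of_calculus[OF assms(2)])
    fix x :: real
    have "((\<lambda>y. exp (w * y) / w) has_field_derivative exp (w * of_real x)) (at (of_real x))"
      using assms(1) by (auto intro!: derivative_eq_intros)
    from has_vector_derivative_real_field[OF this]
    show "((\<lambda>x. exp (w * of_real x) / w) has_vector_derivative exp (w * of_real x))
        (at x within {a..b})"
      by (rule has_vector_derivative_at_within)
  qed
  then show ?thesis
    by (simp add: diff_divide_distrib)
qed

lemma exp_mult_nat_tendsto_zero:
  fixes w :: complex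
  assumes "Re w < 0"
  shows "(\<lambda>N. exp (w * of_real (real N))) \<longlonglongrightarrow> 0"
proof -
  have "filterlim (\<lambda>N. Re w * real N) at_bot sequentially"
    using assms by (auto intro!: filterlim_tendsto_neg_mult_at_bot filterlim_real_sequentially)
  then have "(\<lambda>N. exp (Re w * real N)) \<longlonglongrightarrow> 0"
    by (rule filterlim_compose[OF exp_at_bot])
  then show ?thesis
    by (subst tendsto_norm_zero_iff[symmetric]) simp
qed

lemma norm_exp_minus_one_le_two:
  fixes w :: complex
  assumes "Re w \<le> 0" "0 \<le> t"
  shows "cmod (exp (w * of_real t) - 1) \<le> 2"
proof -
  have "cmod (exp (w * of_real t)) \<le> 1"
    using assms by (simp add: mult_nonpos_nonneg)
  then show ?thesis
    using norm_triangle_ineq4[of "exp (w * of_real t)" 1] by (simp only: norm_one)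
qed

definition laplace_partial :: "(real \<Rightarrow> real) \<Rightarrow> nat \<Rightarrow> complex \<Rightarrow> complex" where
  "laplace_partial g N z = integral {0..real N} (\<lambda>x. of_real (g x) * exp (- z * of_real x))"

text \<open>Only meaningful where the partial integrals converge; elsewhere \<open>lim\<close> returns junk.\<close>

definition laplace :: "(real \<Rightarrow> real) \<Rightarrow> complex \<Rightarrow> complex" where
  "laplace g z = lim (\<lambda>N. laplace_partial g N z)"

lemma laplace_partial_holomorphic:
  assumes g: "continuous_on {0..} g"
  shows "laplace_partial g N holomorphic_on UNIV"
  unfolding laplace_partial_def cbox_interval[symmetric]
proof (rule leibniz_rule_holomorphic)
  have "continuous_on (UNIV \<times> cbox 0 (real N)) (\<lambda>p. g (snd p))"
    by (rule continuous_on_compose2[OF g continuous_on_snd]) auto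
  then show "continuous_on (UNIV \<times> cbox 0 (real N))
      (\<lambda>(z :: complex, x). of_real (g x) * (- of_real x * exp (- z * of_real x)))"
    unfolding case_prod_beta by (intro continuous_intros continuous_on_of_real)
  fix z :: complex
  show "(\<lambda>x. of_real (g x) * exp (- z * of_real x)) integrable_on cbox 0 (real N)"
    by (intro integrable_continuous continuous_intros continuous_on_subset[OF g]) auto
qed (auto intro!: derivative_eq_intros)

lemma laplace_partial_diff_bound:
  assumes g: "continuous_on {0..} g"
    and X: "0 \<le> X" and growth: "\<And>x. X \<le> x \<Longrightarrow> \<bar>g x\<bar> \<le> C * exp (d * x)"
    and r: "0 < r" and z: "d + r \<le> Re z" and nm: "X \<le> real n" "n \<le> m"
  shows "cmod (laplace_partial g m z - laplace_partial g n z) \<le> C * exp (- r * real n) / r"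
proof -
  let ?h = "\<lambda>x. of_real (g x) * exp (- z * of_real x)"
  have C: "0 \<le> C"
    using growth[of X] by (smt (verit) exp_gt_zero zero_le_mult_iff)
  have h_int: "?h integrable_on {a..b}" if "0 \<le> a" for a b
    using that by (intro integrable_continuous_interval continuous_intros continuous_on_subset[OF g]) auto
  have "laplace_partial g m z - laplace_partial g n z = integral {real n..real m} ?h"
    using Henstock_Kurzweil_Integration.integral_combine[of 0 "real n" "real m" ?h] h_int nm
    unfolding laplace_partial_def by (simp add: algebra_simps)
  also have "cmod \<dots> \<le> integral {real n..real m} (\<lambda>x. C * exp (- r * x))"
  proof (rule integral_norm_bound_integral)
    show "?h integrable_on {real n..real m}"
      by (rule h_int) simp
    show "(\<lambda>x. C * exp (- r * x)) integrable_on {real n..real m}"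
      by (intro integrable_continuous_interval continuous_intros)
  next
    fix x assume x: "x \<in> {real n..real m}"
    then have "X \<le> x" "0 \<le> x"
      using nm X by auto
    have "cmod (?h x) = \<bar>g x\<bar> * exp (- Re z * x)"
      by (simp add: norm_mult)
    also have "\<dots> \<le> C * exp (d * x) * exp (- Re z * x)"
      by (intro mult_right_mono growth \<open>X \<le> x\<close>) simp
    also have "\<dots> = C * exp ((d - Re z) * x)"
      by (simp add: mult_exp_exp algebra_simps)
    also have "\<dots> \<le> C * exp (- r * x)"
    proof -
      have "(d - Re z) * x \<le> - r * x"
        using z \<open>0 \<le> x\<close> by (intro mult_right_mono) auto
      then show ?thesis
        using C by (intro mult_left_mono) auto
    qed
    finally show "cmod (?h x) \<le> C * exp (- r * x)" .
  qed
  also have "\<dots> = C * ((exp (- r * real n) - exp (- r * real m)) / r)"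
    using has_integral_exp_linear[of "- r" "real n" "real m"] r nm
    by (simp add: integral_unique divide_simps right_diff_distrib)
  also have "\<dots> \<le> C * exp (- r * real n) / r"
    using C r by (simp add: divide_right_mono mult_left_mono flip: times_divide_eq_right)
  finally show ?thesis .
qed

lemma laplace_uniform_limit:
  assumes g: "continuous_on {0..} g"
    and growth: "\<forall>\<^sub>F x in at_top. \<bar>g x\<bar> \<le> C * exp (d * x)" and r: "0 < r"
  shows "uniform_limit {z. d + r \<le> Re z} (laplace_partial g) (laplace g) sequentially"
proof -
  obtain X where X: "0 \<le> X" "\<And>x. X \<le> x \<Longrightarrow> \<bar>g x\<bar> \<le> C * exp (d * x)"
    using growth unfolding eventually_at_top_linorder by (metis max.cobounded2 max.boundedE)
  have "uniformly_Cauchy_on {z. d + r \<le> Re z} (laplace_partial g)"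
  proof (rule uniformly_Cauchy_onI')
    fix e :: real assume "0 < e"
    have "(\<lambda>n. C * exp (- r * real n) / r) \<longlonglongrightarrow> 0"
      using r by real_asymp
    moreover have "\<forall>\<^sub>F n in sequentially. X \<le> real n"
      using filterlim_real_sequentially by (simp add: filterlim_at_top)
    ultimately have "\<forall>\<^sub>F n in sequentially. X \<le> real n \<and> C * exp (- r * real n) / r < e"
      using \<open>0 < e\<close> by (intro eventually_conj order_tendstoD(2)) auto
    then obtain M where M: "\<And>n. M \<le> n \<Longrightarrow> X \<le> real n \<and> C * exp (- r * real n) / r < e"
      unfolding eventually_sequentially by blast
    show "\<exists>M. \<forall>z\<in>{z. d + r \<le> Re z}. \<forall>m\<ge>M. \<forall>n>m.
            dist (laplace_partial g m z) (laplace_partial g n z) < e"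
    proof (intro exI ballI allI impI)
      fix z m n assume "z \<in> {z. d + r \<le> Re z}" "M \<le> m" "m < n"
      with laplace_partial_diff_bound[OF g X r, of z m n] M[of m]
      show "dist (laplace_partial g m z) (laplace_partial g n z) < e"
        by (simp add: dist_norm norm_minus_commute)
    qed
  qed
  then obtain l where l: "uniform_limit {z. d + r \<le> Re z} (laplace_partial g) l sequentially"
    using Cauchy_uniformly_convergent unfolding uniformly_convergent_on_def by blast
  have "l z = laplace g z" if "z \<in> {z. d + r \<le> Re z}" for z
    using tendsto_uniform_limitI[OF l that] unfolding laplace_def by (simp add: limI)
  then have "uniform_limit {z. d + r \<le> Re z} (laplace_partial g) l sequentially =
      uniform_limit {z. d + r \<le> Re z} (laplace_partial g) (laplace g) sequentially"
    by (intro uniform_limit_cong') simp_all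
  with l show ?thesis
    by simp
qed

lemma laplace_partial_tendsto:
  assumes g: "continuous_on {0..} g"
    and growth: "\<forall>\<^sub>F x in at_top. \<bar>g x\<bar> \<le> C * exp (d * x)" and z: "d < Re z"
  shows "(\<lambda>N. laplace_partial g N z) \<longlonglongrightarrow> laplace g z"
proof -
  have "uniform_limit {w. d + (Re z - d) \<le> Re w} (laplace_partial g) (laplace g) sequentially"
    using z by (intro laplace_uniform_limit[OF g growth]) simp
  then show ?thesis
    by (rule tendsto_uniform_limitI) simp
qed

lemma laplace_holomorphic:
  assumes g: "continuous_on {0..} g"
    and growth: "\<forall>\<^sub>F x in at_top. \<bar>g x\<bar> \<le> C * exp (d * x)"
  shows "laplace g holomorphic_on {z. d < Re z}"
proof (rule holomorphic_uniform_sequence[where f = "laplace_partial g"])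
  show "laplace_partial g n holomorphic_on {z. d < Re z}" for n
    using laplace_partial_holomorphic[OF g] by (rule holomorphic_on_subset) simp
  fix z assume "z \<in> {z. d < Re z}"
  define r where "r = (Re z - d) / 2"
  have r: "0 < r"
    using \<open>z \<in> _\<close> by (simp add: r_def)
  have cball_sub: "cball z r \<subseteq> {w. d + r \<le> Re w}"
  proof
    fix w assume "w \<in> cball z r"
    then have "Re z - Re w \<le> r"
      using abs_Re_le_cmod[of "z - w"] by (simp add: dist_norm)
    then show "w \<in> {w. d + r \<le> Re w}"
      by (simp add: r_def field_simps)
  qed
  have "uniform_limit (cball z r) (laplace_partial g) (laplace g) sequentially"
    using laplace_uniform_limit[OF g growth r] cball_sub by (rule uniform_limit_on_subset)
  moreover have "cball z r \<subseteq> {z. d < Re z}"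
    using cball_sub r by auto
  ultimately show "\<exists>r. 0 < r \<and> cball z r \<subseteq> {z. d < Re z} \<and>
      uniform_limit (cball z r) (laplace_partial g) (laplace g) sequentially"
    using r by blast
qed (rule open_halfspace_Re_gt)

lemma Im_laplace_of_real:
  assumes g: "continuous_on {0..} g"
    and growth: "\<forall>\<^sub>F x in at_top. \<bar>g x\<bar> \<le> C * exp (d * x)" and a: "d < a"
  shows "Im (laplace g (of_real a)) = 0"
proof -
  have "Im (laplace_partial g N (of_real a)) = 0" for N
  proof -
    have "continuous_on {0..real N} (\<lambda>x. g x * exp (- a * x))"
      by (intro continuous_intros continuous_on_subset[OF g]) auto
    from has_integral_of_real[where 'b = complex, OF integrable_integral[OF integrable_continuous_interval[OF this]]]
    have "laplace_partial g N (of_real a) = of_real (integral {0..real N} (\<lambda>x. g x * exp (- a * x)))"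
      unfolding laplace_partial_def by (simp add: integral_unique flip: exp_of_real)
    then show ?thesis
      by simp
  qed
  moreover have "(\<lambda>N. Im (laplace_partial g N (of_real a))) \<longlonglongrightarrow> Im (laplace g (of_real a))"
    using a by (intro tendsto_Im laplace_partial_tendsto[OF g growth]) simp
  ultimately show ?thesis
    by (simp add: LIMSEQ_const_iff)
qed

lemma Im_laplace_tendsto_real_axis:
  assumes g: "continuous_on {0..} g"
    and growth: "\<forall>\<^sub>F x in at_top. \<bar>g x\<bar> \<le> C * exp (d * x)" and a: "d < a"
  shows "((\<lambda>e. Im (laplace g (Complex a e))) \<longlongrightarrow> 0) (at_right 0)"
proof -
  have "isCont (laplace g) (Complex a 0)"
    using holomorphic_on_imp_continuous_on[OF laplace_holomorphic[OF g growth]] a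
    by (simp add: continuous_on_eq_continuous_at[OF open_halfspace_Re_gt])
  moreover have "((\<lambda>e. Complex a e) \<longlongrightarrow> Complex a 0) (at_right 0)"
    by (intro tendsto_Complex tendsto_intros)
  ultimately have "((\<lambda>e. laplace g (Complex a e)) \<longlongrightarrow> laplace g (Complex a 0)) (at_right 0)"
    by (rule isCont_tendsto_compose)
  moreover have "Im (laplace g (Complex a 0)) = 0"
    using Im_laplace_of_real[OF g growth a] by (simp add: complex_of_real_def)
  ultimately show ?thesis
    using tendsto_Im by fastforce
qed

section \<open>The Poisson integral\<close>

text \<open>\<open>\<pi>\<close> times the Poisson kernel of the upper half-plane at the point \<open>p + i e\<close>.\<close>

definition poisson_kernel :: "real \<Rightarrow> real \<Rightarrow> real \<Rightarrow> real" where
  "poisson_kernel e p s = e / ((s - p)^2 + e^2)"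

lemma poisson_kernel_nonneg: "0 \<le> e \<Longrightarrow> 0 \<le> poisson_kernel e p s"
  unfolding poisson_kernel_def by simp

lemma continuous_on_poisson_kernel [continuous_intros]:
  "0 < e \<Longrightarrow> continuous_on S (\<lambda>s. poisson_kernel e p s)"
  unfolding poisson_kernel_def by (intro continuous_intros) (auto simp: add_nonneg_pos)

lemma poisson_kernel_le:
  assumes "0 < e" "0 < \<delta>" "\<delta> \<le> \<bar>s - p\<bar>"
  shows "poisson_kernel e p s \<le> e / \<delta>^2"
proof -
  have "\<delta>^2 \<le> (s - p)^2"
    using assms(2,3) by (metis abs_le_square_iff abs_of_pos)
  then have "\<delta>^2 \<le> (s - p)^2 + e^2"
    by (smt (verit) zero_le_power2)
  then show ?thesis
    unfolding poisson_kernel_def using assms(1,2)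
    by (intro divide_left_mono mult_pos_pos add_nonneg_pos) auto
qed

lemma has_integral_poisson_kernel:
  assumes e: "0 < e" and "a \<le> b"
  shows "(poisson_kernel e p has_integral arctan ((b - p) / e) - arctan ((a - p) / e)) {a..b}"
proof (rule fundamental_theorem_of_calculus[OF \<open>a \<le> b\<close>])
  fix s :: real
  have "((\<lambda>s. arctan ((s - p) / e)) has_real_derivative 1 / (1 + ((s - p) / e)^2) * (1 / e)) (at s)"
    by (auto intro!: derivative_eq_intros simp: divide_inverse)
  moreover have "1 / (1 + ((s - p) / e)^2) * (1 / e) = poisson_kernel e p s"
    using e by (simp add: poisson_kernel_def field_simps power2_eq_square)
  ultimately show "((\<lambda>s. arctan ((s - p) / e)) has_vector_derivative poisson_kernel e p s)
      (at s within {a..b})"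
    by (simp add: has_real_derivative_iff_has_vector_derivative has_vector_derivative_at_within)
qed

lemma poisson_integral_tendsto_zero:
  fixes g :: "real \<Rightarrow> real"
  assumes g: "continuous_on {a..b} g" and p: "p \<in> {a..b}" and gp: "g p = 0"
  shows "((\<lambda>e. integral {a..b} (\<lambda>s. g s * poisson_kernel e p s)) \<longlongrightarrow> 0) (at_right 0)"
proof (rule tendstoI)
  fix \<epsilon> :: real assume "0 < \<epsilon>"
  define \<eta> where "\<eta> = \<epsilon> / (2 * pi)"
  have \<eta>: "0 < \<eta>" "\<eta> * pi = \<epsilon> / 2"
    using \<open>0 < \<epsilon>\<close> by (simp_all add: \<eta>_def)
  obtain M where M: "\<forall>s\<in>{a..b}. \<bar>g s\<bar> \<le> M"
    using compact_imp_bounded[OF compact_continuous_image[OF g compact_Icc]]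
    unfolding bounded_iff by auto
  have "0 \<le> M"
    using M p abs_ge_zero order_trans by blast
  obtain \<delta> where \<delta>: "0 < \<delta>" "\<And>s. s \<in> {a..b} \<Longrightarrow> \<bar>s - p\<bar> < \<delta> \<Longrightarrow> \<bar>g s\<bar> < \<eta>"
    using g p \<eta>(1) gp unfolding continuous_on_iff dist_real_def by (metis diff_zero)
  have bound: "\<bar>integral {a..b} (\<lambda>s. g s * poisson_kernel e p s)\<bar> \<le>
      \<epsilon> / 2 + (b - a) * (M * e / \<delta>^2)"
    if e: "0 < e" for e
  proof -
    have "a \<le> b"
      using p by simp
    let ?I = "arctan ((b - p) / e) - arctan ((a - p) / e)"
    have P: "(poisson_kernel e p has_integral ?I) {a..b}"
      by (rule has_integral_poisson_kernel[OF e \<open>a \<le> b\<close>])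
    have majorant: "((\<lambda>s. \<eta> * poisson_kernel e p s + M * e / \<delta>^2) has_integral
        \<eta> * ?I + (b - a) * (M * e / \<delta>^2)) {a..b}"
      using has_integral_const_real[of "M * e / \<delta>^2" a b] \<open>a \<le> b\<close>
      by (intro has_integral_add has_integral_mult_right P) simp
    have "norm (integral {a..b} (\<lambda>s. g s * poisson_kernel e p s)) \<le>
        integral {a..b} (\<lambda>s. \<eta> * poisson_kernel e p s + M * e / \<delta>^2)"
    proof (rule integral_norm_bound_integral[OF _ has_integral_integrable[OF majorant]])
      show "(\<lambda>s. g s * poisson_kernel e p s) integrable_on {a..b}"
        using e by (intro integrable_continuous_interval continuous_intros g)
      fix s assume s: "s \<in> {a..b}"
      have P_nonneg: "0 \<le> poisson_kernel e p s"
        using e by (simp add: poisson_kernel_nonneg)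
      show "norm (g s * poisson_kernel e p s) \<le> \<eta> * poisson_kernel e p s + M * e / \<delta>^2"
      proof (cases "\<bar>s - p\<bar> < \<delta>")
        case True
        then have "\<bar>g s\<bar> * poisson_kernel e p s \<le> \<eta> * poisson_kernel e p s"
          using \<delta>(2)[OF s] P_nonneg by (intro mult_right_mono) auto
        moreover have "0 \<le> M * e / \<delta>^2"
          using \<open>0 \<le> M\<close> e by simp
        ultimately show ?thesis
          using P_nonneg by (simp add: abs_mult)
      next
        case False
        then have "\<bar>g s\<bar> * poisson_kernel e p s \<le> M * (e / \<delta>^2)"
          using bspec[OF M s] P_nonneg poisson_kernel_le[OF e \<delta>(1), of s p] \<open>0 \<le> M\<close>
          by (intro mult_mono) auto
        moreover have "0 \<le> \<eta> * poisson_kernel e p s"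
          using \<eta>(1) P_nonneg by simp
        ultimately show ?thesis
          using P_nonneg by (simp add: abs_mult)
      qed
    qed
    then have "\<bar>integral {a..b} (\<lambda>s. g s * poisson_kernel e p s)\<bar> \<le>
        \<eta> * ?I + (b - a) * (M * e / \<delta>^2)"
      by (simp add: integral_unique[OF majorant])
    moreover have "\<eta> * ?I \<le> \<eta> * pi"
      using arctan_bounded[of "(b - p) / e"] arctan_bounded[of "(a - p) / e"] \<eta>(1)
      by (intro mult_left_mono) auto
    ultimately show ?thesis
      using \<eta>(2) by linarith
  qed
  have "((\<lambda>e. (b - a) * (M * e / \<delta>^2)) \<longlongrightarrow> (b - a) * (M * 0 / \<delta>^2)) (at_right 0)"
    using \<delta>(1) by (intro tendsto_intros) simp
  then have "\<forall>\<^sub>F e in at_right 0. (b - a) * (M * e / \<delta>^2) < \<epsilon> / 2"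
    using \<open>0 < \<epsilon>\<close> by (intro order_tendstoD(2)) auto
  moreover have "\<forall>\<^sub>F e in at_right 0. (0 :: real) < e"
    by (simp add: eventually_at_right_less)
  ultimately show "\<forall>\<^sub>F e in at_right 0. dist (integral {a..b} (\<lambda>s. g s * poisson_kernel e p s)) 0 < \<epsilon>"
  proof eventually_elim
    case (elim e)
    then show ?case
      using bound[of e] unfolding dist_real_def diff_zero by linarith
  qed
qed

lemma poisson_integral_tendsto:
  fixes f :: "real \<Rightarrow> real"
  assumes f: "continuous_on {a..b} f" and p: "a < p" "p < b"
  shows "((\<lambda>e. integral {a..b} (\<lambda>s. f s * poisson_kernel e p s)) \<longlongrightarrow> pi * f p) (at_right 0)"
proof -
  let ?I = "\<lambda>e. arctan ((b - p) / e) - arctan ((a - p) / e)"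
  have split: "integral {a..b} (\<lambda>s. f s * poisson_kernel e p s) =
      f p * ?I e + integral {a..b} (\<lambda>s. (f s - f p) * poisson_kernel e p s)" if "0 < e" for e
  proof -
    have P: "(poisson_kernel e p has_integral ?I e) {a..b}"
      using that p by (intro has_integral_poisson_kernel) auto
    have "(\<lambda>s. (f s - f p) * poisson_kernel e p s) integrable_on {a..b}"
      using that by (intro integrable_continuous_interval continuous_intros f)
    from has_integral_add[OF has_integral_mult_right[OF P, of "f p"] integrable_integral[OF this]]
    show ?thesis
      by (simp add: algebra_simps integral_unique)
  qed
  have I_lim: "(?I \<longlongrightarrow> pi / 2 - (- (pi / 2))) (at_right 0)"
    using p by (intro tendsto_intros) real_asymp+
  have "((\<lambda>e. integral {a..b} (\<lambda>s. (f s - f p) * poisson_kernel e p s)) \<longlongrightarrow> 0) (at_right 0)"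
    using p by (intro poisson_integral_tendsto_zero continuous_intros f) auto
  from tendsto_add[OF tendsto_mult_left[OF I_lim, of "f p"] this]
  have "((\<lambda>e. f p * ?I e + integral {a..b} (\<lambda>s. (f s - f p) * poisson_kernel e p s))
      \<longlongrightarrow> pi * f p) (at_right 0)"
    by (simp add: mult.commute)
  moreover have "\<forall>\<^sub>F e in at_right 0. f p * ?I e +
      integral {a..b} (\<lambda>s. (f s - f p) * poisson_kernel e p s) =
      integral {a..b} (\<lambda>s. f s * poisson_kernel e p s)"
    using eventually_at_right_less by (rule eventually_mono) (simp add: split)
  ultimately show ?thesis
    by (rule Lim_transform_eventually)
qed

section \<open>The Laplace transform of \<open>\<Phi>\<close> restricted to the real axis\<close>

definition Phi_real :: "(real \<Rightarrow> real) \<Rightarrow> real \<Rightarrow> real \<Rightarrow> real" where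
  "Phi_real f u x = integral {0..u} (\<lambda>s. f s * exp ((u - s) * x))"

definition cauchy_transform :: "(real \<Rightarrow> real) \<Rightarrow> real \<Rightarrow> complex \<Rightarrow> complex" where
  "cauchy_transform f u z = integral {0..u} (\<lambda>s. of_real (f s) / (z - of_real (u - s)))"

lemma has_integral_Phi_real:
  assumes f: "continuous_on {0..u} f"
  shows "((\<lambda>s. f s * exp ((u - s) * x)) has_integral Phi_real f u x) {0..u}"
  unfolding Phi_real_def
  by (intro integrable_integral integrable_continuous_interval continuous_intros f)

lemma Phi_of_real:
  assumes f: "continuous_on {0..u} f"
  shows "Phi f u (of_real x) = of_real (Phi_real f u x)"
  using has_integral_of_real[where 'b = complex, OF has_integral_Phi_real[OF f]]
  unfolding Phi_def by (simp add: integral_unique flip: exp_of_real)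

lemma continuous_on_Phi_real:
  assumes f: "continuous_on {0..u} f"
  shows "continuous_on UNIV (Phi_real f u)"
  unfolding Phi_real_def cbox_interval[symmetric]
proof (rule integral_continuous_on_param)
  have "continuous_on (UNIV \<times> cbox 0 u) (\<lambda>p. f (snd p))"
    by (rule continuous_on_compose2[OF f continuous_on_snd]) (auto simp: cbox_interval)
  then show "continuous_on (UNIV \<times> cbox 0 u) (\<lambda>(x, s). f s * exp ((u - s) * x))"
    unfolding case_prod_beta by (intro continuous_intros)
qed

lemma laplace_partial_Phi_real:
  assumes f: "continuous_on {0..u} f"
  shows "laplace_partial (Phi_real f u) N z = integral {0..u}
      (\<lambda>s. of_real (f s) * integral {0..real N} (\<lambda>x. exp ((of_real (u - s) - z) * of_real x)))"
proof -
  define k where "k = (\<lambda>x s :: real. of_real (f s) * exp ((of_real (u - s) - z) * of_real x))"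
  have inner: "of_real (Phi_real f u x) * exp (- z * of_real x) = integral {0..u} (k x)" for x
  proof -
    have "((\<lambda>s. of_real (f s * exp ((u - s) * x)) * exp (- z * of_real x)) has_integral
        of_real (Phi_real f u x) * exp (- z * of_real x)) {0..u}"
      by (intro has_integral_mult_left has_integral_of_real has_integral_Phi_real f)
    moreover have "of_real (f s * exp ((u - s) * x)) * exp (- z * of_real x) = k x s" for s
      unfolding k_def by (simp add: algebra_simps flip: exp_of_real exp_add)
    ultimately show ?thesis
      by (simp add: integral_unique)
  qed
  have "continuous_on (cbox (0, 0) (real N, u)) (\<lambda>(x, s). k x s)"
  proof -
    have "continuous_on (cbox (0, 0) (real N, u)) (\<lambda>p. f (snd p))"
      by (rule continuous_on_compose2[OF f continuous_on_snd]) (auto simp: cbox_Pair_eq)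
    then show ?thesis
      unfolding k_def case_prod_beta by (intro continuous_intros continuous_on_of_real)
  qed
  from integral_swap_continuous[OF this]
  show ?thesis
    unfolding laplace_partial_def inner by (simp add: cbox_interval k_def)
qed

lemma laplace_partial_Phi_real_tendsto:
  assumes f: "continuous_on {0..u} f" and z: "u < Re z"
  shows "(\<lambda>N. laplace_partial (Phi_real f u) N z) \<longlonglongrightarrow> cauchy_transform f u z"
proof -
  define w where "w s = of_real (u - s) - z" for s
  define c where "c = Re z - u"
  have c: "0 < c"
    using z by (simp add: c_def)
  have Re_w: "Re (w s) \<le> - c" if "s \<in> {0..u}" for s
    using that by (simp add: w_def c_def)
  have w_norm: "c \<le> cmod (w s)" if "s \<in> {0..u}" for s
    using Re_w[OF that] abs_Re_le_cmod[of "w s"] by linarith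
  have w_nz: "w s \<noteq> 0" if "s \<in> {0..u}" for s
    using w_norm[OF that] c by auto
  define F where "F N s = of_real (f s) * ((exp (w s * of_real (real N)) - 1) / w s)" for N s
  have exp_integral: "integral {0..real N} (\<lambda>x. exp (w s * of_real x)) =
      (exp (w s * of_real (real N)) - 1) / w s" if "s \<in> {0..u}" for N s
    using has_integral_exp_linear[OF w_nz[OF that], of 0 "real N"] by (simp add: integral_unique)
  have partial_eq: "laplace_partial (Phi_real f u) N z = integral {0..u} (F N)" for N
    unfolding laplace_partial_Phi_real[OF f] w_def[symmetric]
    by (intro integral_cong) (simp add: F_def exp_integral)
  have "(\<lambda>N. integral {0..u} (F N)) \<longlonglongrightarrow> integral {0..u} (\<lambda>s. of_real (f s) / (z - of_real (u - s)))"
  proof (rule dominated_convergence(2))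
    show "F N integrable_on {0..u}" for N
      unfolding F_def w_def using w_nz[unfolded w_def]
      by (intro integrable_continuous_interval continuous_intros f) auto
    show "(\<lambda>s. 2 * \<bar>f s\<bar> / c) integrable_on {0..u}"
      using c by (intro integrable_continuous_interval continuous_intros f) auto
  next
    fix N s assume s: "s \<in> {0..u}"
    have "cmod (exp (w s * of_real (real N)) - 1) / cmod (w s) \<le> 2 / c"
      using norm_exp_minus_one_le_two[of "w s" "real N"] Re_w[OF s] w_norm[OF s] c
      by (intro frac_le) auto
    from mult_left_mono[OF this abs_ge_zero[of "f s"]]
    show "cmod (F N s) \<le> 2 * \<bar>f s\<bar> / c"
      unfolding F_def norm_mult norm_divide norm_of_real by (simp only: times_divide_eq_right mult.commute)
  next
    fix s assume s: "s \<in> {0..u}"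
    have "(\<lambda>N. F N s) \<longlonglongrightarrow> of_real (f s) * ((0 - 1) / w s)"
      unfolding F_def using exp_mult_nat_tendsto_zero[of "w s"] Re_w[OF s] c w_nz[OF s]
      by (intro tendsto_intros) auto
    moreover have "z - of_real (u - s) = - w s"
      by (simp add: w_def)
    ultimately show "(\<lambda>N. F N s) \<longlonglongrightarrow> of_real (f s) / (z - of_real (u - s))"
      by simp
  qed
  then show ?thesis
    unfolding partial_eq cauchy_transform_def .
qed

lemma cauchy_transform_holomorphic:
  assumes f: "continuous_on {0..u} f"
  shows "cauchy_transform f u holomorphic_on {z. 0 < Im z}"
  unfolding cauchy_transform_def cbox_interval[symmetric]
proof (rule leibniz_rule_holomorphic)
  have nz: "z - of_real (u - s) \<noteq> 0" if "0 < Im z" for z s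
    using that by (auto simp: complex_eq_iff)
  fix z :: complex and s :: real
  assume z: "z \<in> {z. 0 < Im z}"
  show "((\<lambda>z. of_real (f s) / (z - of_real (u - s))) has_field_derivative
      - of_real (f s) / (z - of_real (u - s))^2) (at z within {z. 0 < Im z})"
    using nz z by (auto intro!: derivative_eq_intros simp: power2_eq_square)
  show "(\<lambda>s. of_real (f s) / (z - of_real (u - s))) integrable_on cbox 0 u"
    unfolding cbox_interval using nz z
    by (intro integrable_continuous_interval continuous_intros f) auto
next
  have "continuous_on ({z. 0 < Im z} \<times> cbox 0 u) (\<lambda>p. f (snd p))"
    by (rule continuous_on_compose2[OF f continuous_on_snd]) (auto simp: cbox_interval)
  moreover have "fst p - of_real (u - snd p) \<noteq> 0" if "p \<in> {z. 0 < Im z} \<times> cbox 0 u" for p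
    using that by (auto simp: complex_eq_iff)
  ultimately show "continuous_on ({z. 0 < Im z} \<times> cbox 0 u)
      (\<lambda>(z :: complex, s). - of_real (f s) / (z - of_real (u - s))^2)"
    unfolding case_prod_beta by (intro continuous_intros continuous_on_of_real) auto
qed (rule convex_halfspace_Im_gt)

lemma laplace_Phi_real_eq_cauchy_transform:
  assumes f: "continuous_on {0..u} f"
    and growth: "\<forall>\<^sub>F x in at_top. \<bar>Phi_real f u x\<bar> \<le> C * exp (d * x)"
    and z: "d < Re z" "0 < Im z"
  shows "laplace (Phi_real f u) z = cauchy_transform f u z"
proof -
  let ?S = "{z. max d u < Re z} \<inter> {z. 0 < Im z}"
  let ?T = "{z. d < Re z} \<inter> {z. 0 < Im z}"
  have g: "continuous_on {0..} (Phi_real f u)"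
    using continuous_on_Phi_real[OF f] by (rule continuous_on_subset) simp
  have open_S: "open ?S" and open_T: "open ?T"
    by (intro open_Int open_halfspace_Re_gt open_halfspace_Im_gt)+
  have "Complex (max d u + 1) 1 \<in> ?S"
    by auto
  then have S_ne: "?S \<noteq> {}"
    by blast
  have T_connected: "connected ?T"
    by (intro convex_connected convex_Int convex_halfspace_Re_gt convex_halfspace_Im_gt)
  have S_sub_T: "?S \<subseteq> ?T"
    by auto
  have laplace_hol: "laplace (Phi_real f u) holomorphic_on ?T"
    using laplace_holomorphic[OF g growth] by (rule holomorphic_on_subset) auto
  have cauchy_hol: "cauchy_transform f u holomorphic_on ?T"
    using cauchy_transform_holomorphic[OF f] by (rule holomorphic_on_subset) auto
  have eq_on_S: "laplace (Phi_real f u) w = cauchy_transform f u w" if "w \<in> ?S" for w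
    using that laplace_partial_tendsto[OF g growth] laplace_partial_Phi_real_tendsto[OF f]
    by (auto intro: LIMSEQ_unique)
  show ?thesis
    using z by (intro analytic_continuation_open[OF open_S open_T S_ne T_connected S_sub_T
        laplace_hol cauchy_hol eq_on_S]) auto
qed

lemma Im_cauchy_transform:
  assumes f: "continuous_on {0..u} f" and e: "0 < e"
  shows "Im (cauchy_transform f u (Complex (u - p) e)) =
      - integral {0..u} (\<lambda>s. f s * poisson_kernel e p s)"
proof -
  let ?z = "Complex (u - p) e"
  have "?z - of_real (u - s) = Complex (s - p) e" for s
    by (simp add: complex_eq_iff)
  then have Im_integrand: "Im (of_real (f s) / (?z - of_real (u - s))) = - (f s * poisson_kernel e p s)" for s
    by (simp add: divide_complex_def poisson_kernel_def)
  have "(\<lambda>s. of_real (f s) / (?z - of_real (u - s))) integrable_on {0..u}"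
    using e by (intro integrable_continuous_interval continuous_intros f) (auto simp: complex_eq_iff)
  from has_integral_Im[OF integrable_integral[OF this]]
  have "((\<lambda>s. - (f s * poisson_kernel e p s)) has_integral Im (cauchy_transform f u ?z)) {0..u}"
    unfolding cauchy_transform_def Im_integrand .
  then show ?thesis
    by (simp add: integral_unique flip: integral_neg)
qed

lemma Phi_real_growth_imp_zero:
  assumes f: "continuous_on {0..u} f"
    and growth: "\<forall>\<^sub>F x in at_top. \<bar>Phi_real f u x\<bar> \<le> C * exp (d * x)"
    and p: "0 < p" "p < u" and d: "d < u - p"
  shows "f p = 0"
proof -
  let ?L = "laplace (Phi_real f u)"
  have g: "continuous_on {0..} (Phi_real f u)"
    using continuous_on_Phi_real[OF f] by (rule continuous_on_subset) simp
  have "((\<lambda>e. - Im (?L (Complex (u - p) e))) \<longlongrightarrow> 0) (at_right 0)"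
    using tendsto_minus[OF Im_laplace_tendsto_real_axis[OF g growth d]] by simp
  moreover have "\<forall>\<^sub>F e in at_right 0.
      - Im (?L (Complex (u - p) e)) = integral {0..u} (\<lambda>s. f s * poisson_kernel e p s)"
    using eventually_at_right_less
  proof (rule eventually_mono)
    fix e :: real assume "0 < e"
    then show "- Im (?L (Complex (u - p) e)) = integral {0..u} (\<lambda>s. f s * poisson_kernel e p s)"
      using laplace_Phi_real_eq_cauchy_transform[OF f growth, of "Complex (u - p) e"] d
        Im_cauchy_transform[OF f] by simp
  qed
  ultimately have "((\<lambda>e. integral {0..u} (\<lambda>s. f s * poisson_kernel e p s)) \<longlongrightarrow> 0) (at_right 0)"
    by (rule Lim_transform_eventually)
  with poisson_integral_tendsto[OF f p] have "pi * f p = 0"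
    by (rule tendsto_unique[OF trivial_limit_at_right_real])
  then show ?thesis
    by simp
qed

theorem lemma4p5:
  fixes f :: "real \<Rightarrow> real" and u \<rho> :: real
  assumes "continuous_on {0..1} f"
    and "0 < u" and "u \<le> 1"
    and "\<rho> > 0"
    and "f u \<noteq> 0"
  shows "\<exists>d>0. \<exists>r :: nat \<Rightarrow> real. filterlim r at_top sequentially \<and>
           (\<forall>k\<ge>1. cmod (Phi f u (complex_of_real (r k))) > \<rho> * exp (d * r k))"
proof (rule ccontr)
  assume no_sequence: "\<not> ?thesis"
  have f: "continuous_on {0..u} f"
    using assms(1) by (rule continuous_on_subset) (use assms(3) in auto)
  have growth: "\<forall>\<^sub>F x in at_top. \<bar>Phi_real f u x\<bar> \<le> \<rho> * exp (d * x)" if "0 < d" for d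
  proof (rule ccontr)
    assume "\<not> ?thesis"
    then have "\<exists>\<^sub>F x in at_top. \<rho> * exp (d * x) < cmod (Phi f u (of_real x))"
      by (simp add: not_eventually not_le Phi_of_real[OF f])
    from frequently_at_top_imp_filterlim_seq[OF this] no_sequence \<open>0 < d\<close> show False
      by blast
  qed
  have vanishes: "f s = 0" if s: "s \<in> {0<..<u}" for s
  proof -
    have d: "0 < (u - s) / 2"
      using s by simp
    show ?thesis
      by (rule Phi_real_growth_imp_zero[OF f growth[OF d]]) (use s in auto)
  qed
  have "f u = 0"
  proof (rule continuous_constant_on_closure[where S = "{0<..<u}" and f = f and x = u])
    show "continuous_on (closure {0<..<u}) f"
      using f assms(2) by simp
    show "u \<in> closure {0<..<u}"
      using assms(2) by simp
  qed (rule vanishes)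
  with assms(5) show False
    by contradiction
qed

end
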